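(* (1) $0$ has exactly one infinite OOCF expansion, namely the constant sequence $(2,-1),(2,-1),\dots$; every $\infty$-rational $x\in(0,1)$ has exactly two infinite OOCF expansions and no finite OOCF expansion, and both infinite expansions are eventually the constant sequence $(2,-1)$. (2) Every $1$-rational $x\in(0,1)$ has no infinite OOCF expansion and exactly two finite OOCF expansions; these have the same length and differ only in their last digit. (3) Every irrational $x\in(0,1)$ has a unique infinite OOCF expansion (and no finite one).
   Context: Rationals are written $p/q$ with $p\in\mathbb Z$, $q\in\mathbb N$, $\gcd(p,q)=1$. A rational $p/q$ is a $1$-rational if $p,q$ are both odd and an $\infty$-rational if $p,q$ have different parity. Admissible digits: $D=\{(1,1)\}\cup\{(a,\varepsilon): a\in\mathbb Z,\ a\ge2,\ \varepsilon\in\{-1,1\}\}$. For integers $k\ge1$ put $B(k+1,-1)=\left[\frac{k-1}{k},\frac{2k-1}{2k+1}\right]$ and $B(k,1)=\left[\frac{2k-1}{2k+1},\frac{k}{k+1}\right]$. The OOCF map $T:[0,1]\to[0,1]$ is $T(x)=\frac{kx-(k-1)}{k-(k+1)x}$ for $x\in B(k+1,-1)$, $T(x)=\frac{k-(k+1)x}{kx-(k-1)}$ for $x\in B(k,1)$ ($k\ge1$; the formulas agree at common endpoints), and $T(1)=1$. An infinite OOCF expansion of $x\in[0,1]$ is a sequence $((a_n,\varepsilon_n))_{n\ge1}$ in $D$ with $T^{n-1}(x)\in B(a_n,\varepsilon_n)$ and $T^{n-1}(x)\neq1$ for all $n\ge1$. A finite OOCF expansion of $x$ of length $N\ge1$ is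 a sequence $((a_n,\varepsilon_n))_{n=1}^N$ in $D$ with $T^{n-1}(x)\in B(a_n,\varepsilon_n)$ and $T^{n-1}(x)\ne1$ for $1\le n\le N$, and $T^N(x)=1$. *)

theory Defs
  imports Complex_Main
begin

definition OOCF_digits :: "(nat \<times> int) set" where
  "OOCF_digits = {(1, 1)} \<union> {(a, e). a \<ge> 2 \<and> (e = -1 \<or> e = 1)}"

definition OOCF_B :: "nat \<Rightarrow> int \<Rightarrow> real set" where
  "OOCF_B a e =
     (if e = -1 \<and> a \<ge> 2 then
        (let k = real (a - 1) in {(k - 1) / k .. (2 * k - 1) / (2 * k + 1)})
      else if e = 1 \<and> a \<ge> 1 then
        (let k = real a in {(2 * k - 1) / (2 * k + 1) .. k / (k + 1)})
      else {})"

text \<open>The OOCF map on [0,1], following the piecewise definition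
 (the relevant k is unique in each branch; formulas agree on common endpoints).\<close>

definition OOCF_T :: "real \<Rightarrow> real" where
  "OOCF_T x =
     (if x = 1 then 1
      else if (\<exists>k::nat. k \<ge> 1 \<and> x \<in> OOCF_B (k + 1) (-1)) then
        (let k = real (SOME k::nat. k \<ge> 1 \<and> x \<in> OOCF_B (k + 1) (-1))
         in (k * x - (k - 1)) / (k - (k + 1) * x))
      else
        (let k = real (SOME k::nat. k \<ge> 1 \<and> x \<in> OOCF_B k 1)
         in (k - (k + 1) * x) / (k * x - (k - 1))))"

text \<open>Infinite OOCF expansion: indexed from 0 (d n is the paper's (a_{n+1}, eps_{n+1})).\<close>

definition inf_OOCF_exp :: "real \<Rightarrow> (nat \<Rightarrow> nat \<times> int) \<Rightarrow> bool" where
  "inf_OOCF_exp x d \<longleftrightarrow>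
     (\<forall>n. d n \<in> OOCF_digits \<and> (OOCF_T ^^ n) x \<in> OOCF_B (fst (d n)) (snd (d n))
          \<and> (OOCF_T ^^ n) x \<noteq> 1)"

definition fin_OOCF_exp :: "real \<Rightarrow> (nat \<times> int) list \<Rightarrow> bool" where
  "fin_OOCF_exp x ds \<longleftrightarrow> length ds \<ge> 1 \<and>
     (\<forall>n < length ds. ds ! n \<in> OOCF_digits
          \<and> (OOCF_T ^^ n) x \<in> OOCF_B (fst (ds ! n)) (snd (ds ! n))
          \<and> (OOCF_T ^^ n) x \<noteq> 1)
     \<and> (OOCF_T ^^ length ds) x = 1"

definition one_rational :: "real \<Rightarrow> bool" where
  "one_rational x \<longleftrightarrow> (\<exists>p q :: int. q > 0 \<and> coprime p q \<and> x = of_int p / of_int q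
                         \<and> odd p \<and> odd q)"

definition infty_rational :: "real \<Rightarrow> bool" where
  "infty_rational x \<longleftrightarrow> (\<exists>p q :: int. q > 0 \<and> coprime p q \<and> x = of_int p / of_int q
                         \<and> (odd p \<noteq> odd q))"

end

theory Submission imports Defs begin

text \<open>
  The cylinders are the intervals between consecutive points j / (j + 2): the digits (i + 2, -1)
  and (i + 1, 1) label the two halves of [i / (i + 1), (i + 1) / (i + 2)], and on this block
  T y = min u v / max u v, where u and v are the scaled distances from y to its two ends.
  Hence T maps each cylinder onto [0, 1], sends the endpoints j / (j + 2) to 0 or 1 and every
  other point into (0, 1). A point of (0, 1) therefore has two admissible digits when T maps it
  to 0 or 1 and a single one otherwise, while 0 lies only in B(2, -1) and is fixed.

  For y = p / q the same formula gives T y = p' / q' with 0 < q' and p' + q' = q - p, so the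
  denominators decrease, odd p and q give odd p' and q', and the parity of p + q is preserved.
  So the orbit of a rational reaches {0, 1}: it reaches 1 if x is a 1-rational (it never meets 0)
  and the fixed point 0 if x is an \<infinity>-rational (it never meets 1), whereas an irrational orbit
  stays in (0, 1). Along the orbit there is one admissible digit at every step except the last
  step before 0 or 1 is reached, where there are two.
\<close>

definition OOCF_node :: "nat \<Rightarrow> real" where
  "OOCF_node j = real j / (real j + 2)"

lemma OOCF_node_less_iff: "OOCF_node a < OOCF_node b \<longleftrightarrow> a < b"
  unfolding OOCF_node_def by (simp add: field_simps)

lemma OOCF_node_le_iff: "OOCF_node a \<le> OOCF_node b \<longleftrightarrow> a \<le> b"
  unfolding OOCF_node_def by (simp add: field_simps)

lemma OOCF_node_0 [simp]: "OOCF_node 0 = 0"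
  by (simp add: OOCF_node_def)

lemma OOCF_node_nonneg: "0 \<le> OOCF_node j"
  by (simp add: OOCF_node_def)

lemma OOCF_node_less_1: "OOCF_node j < 1"
  by (simp add: OOCF_node_def)

lemma OOCF_node_even: "OOCF_node (2 * i) = real i / (real i + 1)"
  unfolding OOCF_node_def by (simp add: field_simps)

lemma OOCF_node_odd: "OOCF_node (2 * i + 1) = (2 * real i + 1) / (2 * real i + 3)"
  unfolding OOCF_node_def by (simp add: field_simps)

lemma OOCF_node_even_Suc: "OOCF_node (2 * i + 2) = (real i + 1) / (real i + 2)"
  unfolding OOCF_node_def by (simp add: field_simps)

lemma ex_less_OOCF_node:
  assumes "y < 1"
  shows "\<exists>j. y < OOCF_node j"
proof -
  define j where "j = nat \<lceil>2 * y / (1 - y)\<rceil> + 1"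
  have "2 * y / (1 - y) < real j"
    unfolding j_def by linarith
  then have "y < OOCF_node j"
    using assms unfolding OOCF_node_def by (simp add: field_simps)
  then show ?thesis by blast
qed

definition cylinder_indices :: "real \<Rightarrow> nat set" where
  "cylinder_indices y = {j. 1 \<le> j \<and> OOCF_node (j - 1) \<le> y \<and> y \<le> OOCF_node j}"

lemma cylinder_indices_le_Suc:
  assumes "j \<in> cylinder_indices y" "j' \<in> cylinder_indices y"
  shows "j \<le> Suc j'"
proof -
  have "OOCF_node (j - 1) \<le> OOCF_node j'"
    using assms unfolding cylinder_indices_def by auto
  then show ?thesis by (simp add: OOCF_node_le_iff)
qed

lemma cylinder_indices_same_parity:
  assumes "2 * i + r \<in> cylinder_indices y" "2 * i' + r \<in> cylinder_indices y"
  shows "i = i'"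
  using cylinder_indices_le_Suc[OF assms] cylinder_indices_le_Suc[OF assms(2,1)] by simp

lemma cylinder_indices_0: "cylinder_indices 0 = {1}"
  unfolding cylinder_indices_def
  by (auto simp: OOCF_node_nonneg order_antisym_conv OOCF_node_le_iff[of _ 0, simplified])

lemma cylinder_indices_OOCF_node:
  assumes "1 \<le> m"
  shows "cylinder_indices (OOCF_node m) = {m, Suc m}"
  using assms unfolding cylinder_indices_def by (auto simp: OOCF_node_le_iff)

lemma cylinder_indices_interior:
  assumes "OOCF_node (j - 1) < y" "y < OOCF_node j" "1 \<le> j"
  shows "cylinder_indices y = {j}"
proof -
  have "i = j" if "i \<in> cylinder_indices y" for i
  proof -
    have "OOCF_node (i - 1) < OOCF_node j" "OOCF_node (j - 1) < OOCF_node i" "1 \<le> i"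
      using that assms unfolding cylinder_indices_def by auto
    then show ?thesis
      using \<open>1 \<le> j\<close> by (auto simp: OOCF_node_less_iff)
  qed
  moreover have "j \<in> cylinder_indices y"
    using assms unfolding cylinder_indices_def by auto
  ultimately show ?thesis by blast
qed

lemma cylinder_indices_cases:
  assumes "0 \<le> y" "y < 1"
  obtains "y = 0"
  | m where "1 \<le> m" "y = OOCF_node m"
  | j where "1 \<le> j" "OOCF_node (j - 1) < y" "y < OOCF_node j"
proof -
  define j where "j = (LEAST j. y < OOCF_node j)"
  have above: "y < OOCF_node j"
    unfolding j_def using ex_less_OOCF_node[OF assms(2)] by (rule LeastI_ex)
  then have "1 \<le> j"
    using assms(1) by (cases j) auto
  then have "\<not> y < OOCF_node (j - 1)"
    unfolding j_def by (metis Least_le diff_less leD zero_less_one less_le_trans)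
  then consider "OOCF_node (j - 1) < y" | "y = OOCF_node (j - 1)"
    by linarith
  then show ?thesis
  proof cases
    case 2
    show ?thesis
    proof (cases "j = 1")
      case False
      then show ?thesis
        using that(2)[of "j - 1"] 2 \<open>1 \<le> j\<close> by simp
    qed (use that(1) 2 in simp)
  qed (use that(3) \<open>1 \<le> j\<close> above in blast)
qed

lemma pos_nat_parity_cases:
  assumes "1 \<le> (j::nat)"
  obtains i where "j = 2 * i + 1" | i where "j = 2 * i + 2"
proof (cases "odd j")
  case True
  then show ?thesis
    using that(1) by (metis oddE)
next
  case False
  then obtain i where "j = 2 * i"
    by blast
  with assms have "j = 2 * (i - 1) + 2"
    by simp
  then show ?thesis
    using that(2) by blast
qed

definition OOCF_digit :: "nat \<Rightarrow> nat \<times> int" where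
  "OOCF_digit j = (if odd j then ((j + 3) div 2, -1) else (j div 2, 1))"

lemma OOCF_digit_odd: "OOCF_digit (2 * i + 1) = (i + 2, -1)"
  unfolding OOCF_digit_def by simp

lemma OOCF_digit_even: "OOCF_digit (2 * i + 2) = (i + 1, 1)"
  unfolding OOCF_digit_def by simp

lemma inj_OOCF_digit: "inj OOCF_digit"
proof (rule injI)
  fix a b
  assume "OOCF_digit a = OOCF_digit b"
  then show "a = b"
    unfolding OOCF_digit_def by (auto split: if_splits) presburger+
qed

lemma OOCF_B_minus: "OOCF_B (i + 2) (-1) = {OOCF_node (2 * i) .. OOCF_node (2 * i + 1)}"
  unfolding OOCF_B_def OOCF_node_even OOCF_node_odd by (simp add: Let_def algebra_simps)

lemma OOCF_B_plus: "OOCF_B (i + 1) 1 = {OOCF_node (2 * i + 1) .. OOCF_node (2 * i + 2)}"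
  unfolding OOCF_B_def OOCF_node_even_Suc OOCF_node_odd by (simp add: Let_def algebra_simps)

lemma OOCF_B_digit:
  assumes "1 \<le> j"
  shows "OOCF_B (fst (OOCF_digit j)) (snd (OOCF_digit j)) = {OOCF_node (j - 1) .. OOCF_node j}"
  using assms
proof (cases rule: pos_nat_parity_cases)
  case (1 i)
  then show ?thesis by (simp only: OOCF_digit_odd fst_conv snd_conv OOCF_B_minus) simp
next
  case (2 i)
  then show ?thesis by (simp only: OOCF_digit_even fst_conv snd_conv OOCF_B_plus) simp
qed

lemma OOCF_digits_eq_image: "OOCF_digits = OOCF_digit ` {1..}"
proof (intro equalityI subsetI)
  fix d
  assume "d \<in> OOCF_digits"
  then consider "d = (1, 1)" | a where "d = (a, -1)" "2 \<le> a" | a where "d = (a, 1)" "2 \<le> a"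
    unfolding OOCF_digits_def by auto
  then show "d \<in> OOCF_digit ` {1..}"
  proof cases
    case 1
    then show ?thesis
      by (intro image_eqI[of _ _ 2]) (auto simp: OOCF_digit_def)
  next
    case (2 a)
    then show ?thesis
      using OOCF_digit_odd[of "a - 2"] by (intro image_eqI[of _ _ "2 * (a - 2) + 1"]) auto
  next
    case (3 a)
    then show ?thesis
      using OOCF_digit_even[of "a - 1"] by (intro image_eqI[of _ _ "2 * (a - 1) + 2"]) auto
  qed
next
  fix d
  assume "d \<in> OOCF_digit ` {1..}"
  then obtain j where "1 \<le> j" "d = OOCF_digit j"
    by auto
  from \<open>1 \<le> j\<close> show "d \<in> OOCF_digits"
  proof (cases rule: pos_nat_parity_cases)
    case (1 i)
    then show ?thesis by (simp only: \<open>d = OOCF_digit j\<close> OOCF_digit_odd) (simp add: OOCF_digits_def)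
  next
    case (2 i)
    then show ?thesis by (simp only: \<open>d = OOCF_digit j\<close> OOCF_digit_even) (auto simp: OOCF_digits_def)
  qed
qed

definition admissible_digits :: "real \<Rightarrow> (nat \<times> int) set" where
  "admissible_digits y = {d \<in> OOCF_digits. y \<in> OOCF_B (fst d) (snd d)}"

lemma admissible_digits_eq_image: "admissible_digits y = OOCF_digit ` cylinder_indices y"
  unfolding admissible_digits_def OOCF_digits_eq_image cylinder_indices_def
  using OOCF_B_digit by fastforce

lemma admissible_digits_0: "admissible_digits 0 = {(2, -1)}"
  by (simp add: admissible_digits_eq_image cylinder_indices_0 OOCF_digit_def)

text \<open>On the block [OOCF_node (2 * i), OOCF_node (2 * i + 2)] = B(i + 2, -1) \<union> B(i + 1, 1),
  these are (i + 1) (y - OOCF_node (2 * i)) and (i + 2) (OOCF_node (2 * i + 2) - y).\<close>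

definition left_dist :: "nat \<Rightarrow> real \<Rightarrow> real" where
  "left_dist i y = (real i + 1) * y - real i"

definition right_dist :: "nat \<Rightarrow> real \<Rightarrow> real" where
  "right_dist i y = (real i + 1) - (real i + 2) * y"

lemma left_plus_right_dist: "left_dist i y + right_dist i y = 1 - y"
  unfolding left_dist_def right_dist_def by (simp add: algebra_simps)

lemma left_dist_nonneg_iff: "0 \<le> left_dist i y \<longleftrightarrow> OOCF_node (2 * i) \<le> y"
  unfolding left_dist_def OOCF_node_even by (simp add: divide_le_eq algebra_simps)

lemma left_dist_pos_iff: "0 < left_dist i y \<longleftrightarrow> OOCF_node (2 * i) < y"
  unfolding left_dist_def OOCF_node_even by (simp add: divide_less_eq algebra_simps)

lemma right_dist_nonneg_iff: "0 \<le> right_dist i y \<longleftrightarrow> y \<le> OOCF_node (2 * i + 2)"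
  unfolding right_dist_def OOCF_node_even_Suc by (simp add: le_divide_eq algebra_simps)

lemma right_dist_pos_iff: "0 < right_dist i y \<longleftrightarrow> y < OOCF_node (2 * i + 2)"
  unfolding right_dist_def OOCF_node_even_Suc by (simp add: less_divide_eq algebra_simps)

lemma left_le_right_dist_iff: "left_dist i y \<le> right_dist i y \<longleftrightarrow> y \<le> OOCF_node (2 * i + 1)"
  unfolding left_dist_def right_dist_def OOCF_node_odd by (simp add: le_divide_eq algebra_simps)

lemma right_le_left_dist_iff: "right_dist i y \<le> left_dist i y \<longleftrightarrow> OOCF_node (2 * i + 1) \<le> y"
  unfolding left_dist_def right_dist_def OOCF_node_odd by (simp add: divide_le_eq algebra_simps)

lemma OOCF_T_minus:
  assumes "y \<in> {OOCF_node (2 * i) .. OOCF_node (2 * i + 1)}"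
  shows "OOCF_T y = left_dist i y / right_dist i y"
proof -
  let ?P = "\<lambda>k::nat. 1 \<le> k \<and> y \<in> OOCF_B (k + 1) (-1)"
  have P: "?P (i + 1)"
    using assms OOCF_B_minus[of i] by (simp add: numeral_2_eq_2)
  have "k = i + 1" if "?P k" for k
  proof -
    define i' where "i' = k - 1"
    have "k = i' + 1"
      using that by (simp add: i'_def)
    then have "2 * i' + 1 \<in> cylinder_indices y" "2 * i + 1 \<in> cylinder_indices y"
      using that assms OOCF_B_minus[of i'] by (auto simp: cylinder_indices_def numeral_2_eq_2)
    then show ?thesis
      using \<open>k = i' + 1\<close> cylinder_indices_same_parity by blast
  qed
  with P have k: "(SOME k. ?P k) = i + 1"
    by (rule some_equality)
  have "y \<noteq> 1"
    using assms OOCF_node_less_1[of "2 * i + 1"] by auto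
  moreover have "\<exists>k. ?P k"
    using P by blast
  ultimately have "OOCF_T y = (let k = real (SOME k. ?P k) in (k * y - (k - 1)) / (k - (k + 1) * y))"
    unfolding OOCF_T_def by simp
  then show ?thesis
    unfolding k left_dist_def right_dist_def by (simp add: Let_def add.commute)
qed

lemma OOCF_T_plus:
  assumes y: "y \<in> {OOCF_node (2 * i + 1) .. OOCF_node (2 * i + 2)}"
  shows "OOCF_T y = right_dist i y / left_dist i y"
proof (cases "\<exists>k::nat. 1 \<le> k \<and> y \<in> OOCF_B (k + 1) (-1)")
  case True
  \<comment> \<open>then y is a common endpoint with a minus cylinder, where both branches agree\<close>
  then obtain k where k: "1 \<le> k" "y \<in> OOCF_B (k + 1) (-1)"
    by blast
  define i' where "i' = k - 1"
  have y': "y \<in> {OOCF_node (2 * i') .. OOCF_node (2 * i' + 1)}"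
    using k OOCF_B_minus[of i'] by (simp add: i'_def numeral_2_eq_2)
  then have "2 * i' + 1 \<in> cylinder_indices y" "2 * i + 2 \<in> cylinder_indices y"
    using y by (auto simp: cylinder_indices_def)
  then have "2 * i' + 1 \<le> Suc (2 * i + 2)" "2 * i + 2 \<le> Suc (2 * i' + 1)"
    by (blast intro: cylinder_indices_le_Suc)+
  then consider "i' = i" | "i' = i + 1"
    by linarith
  then show ?thesis
  proof cases
    case 1
    then have "left_dist i y = right_dist i y" "0 < right_dist i y"
      using y y' left_le_right_dist_iff right_le_left_dist_iff right_dist_pos_iff
      by (auto simp: OOCF_node_less_iff intro: order_antisym)
    then show ?thesis
      using OOCF_T_minus[OF y'] 1 by simp
  next
    case 2
    then have "left_dist i' y = 0" "right_dist i y = 0"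
      using y y' left_dist_nonneg_iff[of i' y] right_dist_nonneg_iff[of i y]
        left_dist_pos_iff[of i' y] right_dist_pos_iff[of i y]
      by (auto simp: algebra_simps)
    then show ?thesis
      using OOCF_T_minus[OF y'] by simp
  qed
next
  case False
  let ?P = "\<lambda>k::nat. 1 \<le> k \<and> y \<in> OOCF_B k 1"
  have P: "?P (i + 1)"
    using y OOCF_B_plus[of i] by simp
  have "k = i + 1" if "?P k" for k
  proof -
    define i' where "i' = k - 1"
    have "k = i' + 1"
      using that by (simp add: i'_def)
    then have "2 * i' + 2 \<in> cylinder_indices y" "2 * i + 2 \<in> cylinder_indices y"
      using that y OOCF_B_plus[of i'] by (auto simp: cylinder_indices_def)
    then show ?thesis
      using \<open>k = i' + 1\<close> cylinder_indices_same_parity by blast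
  qed
  with P have k: "(SOME k. ?P k) = i + 1"
    by (rule some_equality)
  have "y \<noteq> 1"
    using y OOCF_node_less_1[of "2 * i + 2"] by auto
  then have "OOCF_T y = (let k = real (SOME k. ?P k) in (k - (k + 1) * y) / (k * y - (k - 1)))"
    unfolding OOCF_T_def using False by (simp only: if_False)
  then show ?thesis
    unfolding k left_dist_def right_dist_def by (simp add: Let_def add.commute)
qed

lemma OOCF_T_block:
  assumes y: "y \<in> {OOCF_node (2 * i) .. OOCF_node (2 * i + 2)}"
  shows "OOCF_T y = min (left_dist i y) (right_dist i y) / max (left_dist i y) (right_dist i y)"
proof (cases "y \<le> OOCF_node (2 * i + 1)")
  case True
  then show ?thesis
    using y OOCF_T_minus[of y i] left_le_right_dist_iff[of i y] by simp
next
  case False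
  then show ?thesis
    using y OOCF_T_plus[of y i] right_le_left_dist_iff[of i y] by simp
qed

lemma OOCF_block_exists:
  assumes "0 \<le> y" "y < 1"
  obtains i where "y \<in> {OOCF_node (2 * i) .. OOCF_node (2 * i + 2)}"
proof -
  obtain j where "y < OOCF_node j"
    using ex_less_OOCF_node[OF assms(2)] by blast
  then have ex: "\<exists>i. y \<le> OOCF_node (2 * i + 2)"
    using OOCF_node_le_iff[of j "2 * j + 2"] by (intro exI[of _ j]) simp
  define i where "i = (LEAST i. y \<le> OOCF_node (2 * i + 2))"
  have "y \<le> OOCF_node (2 * i + 2)"
    unfolding i_def using ex by (rule LeastI_ex)
  moreover have "OOCF_node (2 * i) \<le> y"
  proof (cases i)
    case (Suc i')
    then have "\<not> y \<le> OOCF_node (2 * i' + 2)"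
      using not_less_Least[of i' "\<lambda>i. y \<le> OOCF_node (2 * i + 2)"] i_def by simp
    then show ?thesis
      using Suc by simp
  qed (use assms in simp)
  ultimately show ?thesis
    using that by simp
qed

lemma OOCF_T_1 [simp]: "OOCF_T 1 = 1"
  by (simp add: OOCF_T_def)

lemma OOCF_T_range:
  assumes "0 \<le> y" "y \<le> 1"
  shows "0 \<le> OOCF_T y \<and> OOCF_T y \<le> 1"
proof (cases "y = 1")
  case False
  with assms have "y < 1"
    by simp
  then obtain i where y: "y \<in> {OOCF_node (2 * i) .. OOCF_node (2 * i + 2)}"
    using assms(1) OOCF_block_exists by blast
  then have "0 \<le> left_dist i y" "0 \<le> right_dist i y"
    by (simp_all add: left_dist_nonneg_iff right_dist_nonneg_iff)
  then show ?thesis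
    unfolding OOCF_T_block[OF y] by (auto simp: min_def max_def divide_le_eq_1)
qed simp

lemma OOCF_T_OOCF_node: "OOCF_T (OOCF_node m) = 0 \<or> OOCF_T (OOCF_node m) = 1"
proof (cases "even m")
  case True
  then obtain i where m: "m = 2 * i"
    by blast
  have y: "OOCF_node (2 * i) \<in> {OOCF_node (2 * i) .. OOCF_node (2 * i + 2)}"
    by (simp add: OOCF_node_le_iff)
  have "left_dist i (OOCF_node (2 * i)) = 0"
    unfolding left_dist_def OOCF_node_even by (simp add: field_simps)
  moreover have "0 \<le> right_dist i (OOCF_node (2 * i))"
    by (simp add: right_dist_nonneg_iff OOCF_node_le_iff)
  ultimately show ?thesis
    unfolding m OOCF_T_block[OF y] by simp
next
  case False
  then obtain i where m: "m = 2 * i + 1"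
    using oddE by blast
  have y: "OOCF_node (2 * i + 1) \<in> {OOCF_node (2 * i) .. OOCF_node (2 * i + 2)}"
    by (simp add: OOCF_node_le_iff)
  have "left_dist i (OOCF_node (2 * i + 1)) = right_dist i (OOCF_node (2 * i + 1))"
    unfolding left_dist_def right_dist_def OOCF_node_odd by (simp add: field_simps)
  moreover have "0 < right_dist i (OOCF_node (2 * i + 1))"
    by (simp add: right_dist_pos_iff OOCF_node_less_iff)
  ultimately show ?thesis
    unfolding m OOCF_T_block[OF y] by simp
qed

lemma OOCF_T_0 [simp]: "OOCF_T 0 = 0"
  using OOCF_T_block[of 0 0] by (simp add: left_dist_def right_dist_def OOCF_node_nonneg)

lemma OOCF_T_off_nodes:
  assumes "0 \<le> y" "y < 1" "y \<notin> range OOCF_node"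
  shows "0 < OOCF_T y \<and> OOCF_T y < 1"
proof -
  obtain i where y: "y \<in> {OOCF_node (2 * i) .. OOCF_node (2 * i + 2)}"
    using assms OOCF_block_exists by blast
  have "y \<noteq> OOCF_node (2 * i)" "y \<noteq> OOCF_node (2 * i + 1)" "y \<noteq> OOCF_node (2 * i + 2)"
    using assms(3) by auto
  moreover have "left_dist i y \<le> right_dist i y \<and> right_dist i y \<le> left_dist i y
      \<longleftrightarrow> y = OOCF_node (2 * i + 1)"
    unfolding left_le_right_dist_iff right_le_left_dist_iff by auto
  ultimately have "0 < left_dist i y" "0 < right_dist i y" "left_dist i y \<noteq> right_dist i y"
    using y by (auto simp: left_dist_pos_iff right_dist_pos_iff)
  then show ?thesis
    unfolding OOCF_T_block[OF y] by (auto simp: min_def max_def)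
qed

lemma OOCF_T_fraction:
  fixes p q :: int
  assumes y: "0 < y" "y < 1" "y = of_int p / of_int q" and q: "0 < q"
  obtains p' q' where "0 < q'" "q' < q" "OOCF_T y = of_int p' / of_int q'" "p' + q' = q - p"
    "odd p \<Longrightarrow> odd q \<Longrightarrow> odd p' \<and> odd q'"
proof -
  obtain i where blk: "y \<in> {OOCF_node (2 * i) .. OOCF_node (2 * i + 2)}"
    using OOCF_block_exists y(1,2) by (meson less_imp_le)
  define a where "a = (int i + 1) * p - int i * q"
  define b where "b = (int i + 1) * q - (int i + 2) * p"
  have p: "of_int p = y * of_int q"
    using y(3) q by simp
  have a: "of_int a = of_int q * left_dist i y"
    unfolding a_def left_dist_def using p by (simp add: algebra_simps)
  have b: "of_int b = of_int q * right_dist i y"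
    unfolding b_def right_dist_def using p by (simp add: algebra_simps)
  have "0 \<le> real_of_int a" "0 \<le> real_of_int b"
    unfolding a b using q blk by (simp_all add: left_dist_nonneg_iff right_dist_nonneg_iff)
  then have ab: "0 \<le> a" "0 \<le> b"
    by simp_all
  have sum: "a + b = q - p"
    by (simp add: a_def b_def algebra_simps)
  have "0 < real_of_int p" "real_of_int p < of_int q"
    using p y(1,2) q by simp_all
  then have "0 < p" "p < q"
    by simp_all
  have "a \<le> b \<longleftrightarrow> left_dist i y \<le> right_dist i y"
    using a b q by (metis of_int_le_iff of_int_0_less_iff mult_le_cancel_left_pos)
  then have T: "OOCF_T y = of_int (min a b) / of_int (max a b)"
    unfolding OOCF_T_block[OF blk] min_def max_def using a b q by simp
  have "odd a \<and> odd b" if "odd p" "odd q"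
    using that unfolding a_def b_def by (cases "even i") (auto simp: even_mult_iff)
  moreover have "0 < max a b" "max a b < q" "min a b + max a b = q - p"
    using ab sum \<open>0 < p\<close> \<open>p < q\<close> by (auto simp: min_def max_def)
  ultimately show ?thesis
    using that[of "max a b" "min a b"] T by (auto simp: min_def max_def)
qed

lemma in_Rats_if_mult_eq:
  fixes c d y :: real
  assumes "c * y = d" "c \<noteq> 0" "c \<in> \<rat>" "d \<in> \<rat>"
  shows "y \<in> \<rat>"
proof -
  have "y = d / c"
    using assms(1,2) by (simp add: field_simps)
  then show ?thesis
    using assms(3,4) by simp
qed

lemma in_Rats_if_OOCF_T_in_Rats:
  assumes "0 \<le> y" "y < 1" "OOCF_T y \<in> \<rat>"
  shows "y \<in> \<rat>"
proof -
  obtain i where blk: "y \<in> {OOCF_node (2 * i) .. OOCF_node (2 * i + 2)}"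
    using OOCF_block_exists assms(1,2) by blast
  define r where "r = OOCF_T y"
  have r: "r \<in> \<rat>" "0 \<le> r"
    using assms OOCF_T_range[of y] unfolding r_def by simp_all
  have "0 \<le> left_dist i y" "0 \<le> right_dist i y"
    using blk by (simp_all add: left_dist_nonneg_iff right_dist_nonneg_iff)
  moreover have "left_dist i y + right_dist i y > 0"
    using assms(2) by (simp add: left_plus_right_dist)
  ultimately consider "left_dist i y \<le> right_dist i y" "0 < right_dist i y"
    | "right_dist i y < left_dist i y" "0 < left_dist i y"
    by linarith
  then show ?thesis
  proof cases
    case 1
    then have "r * right_dist i y = left_dist i y"
      unfolding r_def OOCF_T_block[OF blk] by simp
    then have "(r * (real i + 2) + (real i + 1)) * y = r * (real i + 1) + real i"
      unfolding left_dist_def right_dist_def by (simp add: algebra_simps)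
    moreover have "r * (real i + 2) + (real i + 1) \<noteq> 0"
      using r(2) by (smt (verit) mult_nonneg_nonneg of_nat_0_le_iff)
    ultimately show ?thesis
      by (rule in_Rats_if_mult_eq) (use r(1) in simp_all)
  next
    case 2
    then have "r * left_dist i y = right_dist i y"
      unfolding r_def OOCF_T_block[OF blk] by simp
    then have "(r * (real i + 1) + (real i + 2)) * y = real i + 1 + r * real i"
      unfolding left_dist_def right_dist_def by (simp add: algebra_simps)
    moreover have "r * (real i + 1) + (real i + 2) \<noteq> 0"
      using r(2) by (smt (verit) mult_nonneg_nonneg of_nat_0_le_iff)
    ultimately show ?thesis
      by (rule in_Rats_if_mult_eq) (use r(1) in simp_all)
  qed
qed

abbreviation OOCF_orbit :: "real \<Rightarrow> nat \<Rightarrow> real" where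
  "OOCF_orbit x n \<equiv> (OOCF_T ^^ n) x"

lemma OOCF_orbit_range:
  assumes "0 \<le> x" "x \<le> 1"
  shows "0 \<le> OOCF_orbit x n \<and> OOCF_orbit x n \<le> 1"
  by (induction n) (use assms in \<open>auto dest: OOCF_T_range\<close>)

lemma OOCF_orbit_invariant:
  assumes "0 \<le> x" "x \<le> 1" "P x" "\<And>y. 0 \<le> y \<Longrightarrow> y \<le> 1 \<Longrightarrow> P y \<Longrightarrow> P (OOCF_T y)"
  shows "P (OOCF_orbit x n)"
  by (induction n) (use assms OOCF_orbit_range[OF assms(1,2)] in auto)

lemma OOCF_orbit_add: "OOCF_orbit x (m + n) = OOCF_orbit (OOCF_orbit x n) m"
  by (simp add: funpow_add)

lemma OOCF_orbit_0: "OOCF_orbit 0 n = 0"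
  by (induction n) auto

lemma rational_OOCF_orbit_reaches_0_or_1:
  fixes p q :: int
  assumes "0 < q" "0 \<le> y" "y \<le> 1" "y = of_int p / of_int q"
  shows "\<exists>n. OOCF_orbit y n \<in> {0, 1}"
  using assms
proof (induction "nat q" arbitrary: p q y rule: less_induct)
  case less
  show ?case
  proof (cases "y = 0 \<or> y = 1")
    case True
    then show ?thesis
      by (intro exI[of _ 0]) auto
  next
    case False
    then have "0 < y" "y < 1"
      using less.prems(2,3) by auto
    then obtain p' q' where "0 < q'" "q' < q" "OOCF_T y = of_int p' / of_int q'"
      using OOCF_T_fraction less.prems(1,4) by metis
    moreover have "0 \<le> OOCF_T y" "OOCF_T y \<le> 1"
      using OOCF_T_range less.prems(2,3) by simp_all
    ultimately obtain n where "OOCF_orbit (OOCF_T y) n \<in> {0, 1}"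
      using less.hyps[of q'] by fastforce
    then show ?thesis
      by (intro exI[of _ "Suc n"]) (simp add: funpow_Suc_right del: funpow.simps)
  qed
qed

lemma rational_OOCF_orbit_first_hit:
  assumes "x \<in> \<rat>" "0 < x" "x < 1"
  obtains N where "0 < N" "\<And>n. n < N \<Longrightarrow> 0 < OOCF_orbit x n \<and> OOCF_orbit x n < 1"
    "OOCF_orbit x N \<in> {0, 1}"
proof -
  obtain p q where "0 < q" "x = of_int p / of_int q"
    using assms(1) by (rule Rats_cases')
  then have ex: "\<exists>n. OOCF_orbit x n \<in> {0, 1}"
    using rational_OOCF_orbit_reaches_0_or_1 assms(2,3) by simp
  define N where "N = (LEAST n. OOCF_orbit x n \<in> {0, 1})"
  have "OOCF_orbit x N \<in> {0, 1}"
    unfolding N_def using ex by (rule LeastI_ex)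
  moreover have "0 < OOCF_orbit x n \<and> OOCF_orbit x n < 1" if "n < N" for n
    using not_less_Least[OF that[unfolded N_def]] OOCF_orbit_range[of x n] assms(2,3)
    by (auto simp: N_def order_le_less)
  moreover from this[of 0] have "0 < N"
    using assms(2,3) calculation(1) by (cases N) auto
  ultimately show ?thesis
    using that by blast
qed

text \<open>Unlike \<open>one_rational\<close> and \<open>infty_rational\<close>, these classes do not ask for a
  reduced fraction, since one step of \<open>OOCF_T\<close> need not produce one.\<close>

definition odd_fraction :: "real \<Rightarrow> bool" where
  "odd_fraction y \<longleftrightarrow> (\<exists>p q :: int. 0 < q \<and> y = of_int p / of_int q \<and> odd p \<and> odd q)"

definition odd_sum_fraction :: "real \<Rightarrow> bool" where
  "odd_sum_fraction y \<longleftrightarrow> (\<exists>p q :: int. 0 < q \<and> y = of_int p / of_int q \<and> odd (p + q))"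

lemma odd_fraction_ne_0: "odd_fraction y \<Longrightarrow> y \<noteq> 0"
  unfolding odd_fraction_def by auto

lemma odd_sum_fraction_ne_1: "odd_sum_fraction y \<Longrightarrow> y \<noteq> 1"
  unfolding odd_sum_fraction_def by auto

lemma odd_fraction_OOCF_T:
  assumes "0 \<le> y" "y \<le> 1" "odd_fraction y"
  shows "odd_fraction (OOCF_T y)"
proof -
  obtain p q :: int where pq: "0 < q" "y = of_int p / of_int q" "odd p" "odd q"
    using assms(3) unfolding odd_fraction_def by blast
  show ?thesis
  proof (cases "y = 1")
    case False
    have "y \<noteq> 0"
      using assms(3) by (rule odd_fraction_ne_0)
    with assms False have "0 < y" "y < 1"
      by simp_all
    then show ?thesis
      using OOCF_T_fraction[OF _ _ pq(2,1)] pq(3,4) unfolding odd_fraction_def by metis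
  qed (use assms in simp)
qed

lemma odd_sum_fraction_OOCF_T:
  assumes "0 \<le> y" "y \<le> 1" "odd_sum_fraction y"
  shows "odd_sum_fraction (OOCF_T y)"
proof -
  obtain p q :: int where pq: "0 < q" "y = of_int p / of_int q" "odd (p + q)"
    using assms(3) unfolding odd_sum_fraction_def by blast
  show ?thesis
  proof (cases "y = 0")
    case False
    have "y \<noteq> 1"
      using assms(3) by (rule odd_sum_fraction_ne_1)
    with assms False have "0 < y" "y < 1"
      by simp_all
    moreover have "odd (q - p)"
      using pq(3) by simp
    ultimately show ?thesis
      using OOCF_T_fraction[OF _ _ pq(2,1)] unfolding odd_sum_fraction_def by metis
  qed (use assms in simp)
qed

lemma admissible_digits_singleton:
  assumes "0 < y" "y < 1" "0 < OOCF_T y" "OOCF_T y < 1"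
  shows "\<exists>d. admissible_digits y = {d}"
proof -
  from assms(1,2) have "0 \<le> y" "y < 1"
    by simp_all
  then show ?thesis
  proof (cases rule: cylinder_indices_cases)
    case (2 m)
    then show ?thesis
      using OOCF_T_OOCF_node[of m] assms(3,4) by auto
  next
    case (3 j)
    then show ?thesis
      by (simp add: admissible_digits_eq_image cylinder_indices_interior)
  qed (use assms in simp)
qed

lemma admissible_digits_pair:
  assumes "0 < y" "y < 1" "OOCF_T y \<in> {0, 1}"
  shows "\<exists>u v. u \<noteq> v \<and> admissible_digits y = {u, v}"
proof -
  from assms(1,2) have "0 \<le> y" "y < 1"
    by simp_all
  then show ?thesis
  proof (cases rule: cylinder_indices_cases)
    case (2 m)
    have "OOCF_digit m \<noteq> OOCF_digit (Suc m)"
      using inj_OOCF_digit by (simp add: inj_eq)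
    then show ?thesis
      using 2 by (intro exI[of _ "OOCF_digit m"] exI[of _ "OOCF_digit (Suc m)"])
        (simp add: admissible_digits_eq_image cylinder_indices_OOCF_node)
  next
    case (3 j)
    then have "y \<notin> range OOCF_node"
      using OOCF_node_less_iff[of "j - 1"] OOCF_node_less_iff[of _ j] by fastforce
    then show ?thesis
      using OOCF_T_off_nodes[of y] assms by auto
  qed (use assms in simp)
qed

lemma admissible_digits_along_orbit:
  assumes "\<And>n. n < N \<Longrightarrow> 0 < OOCF_orbit x n \<and> OOCF_orbit x n < 1"
    and "OOCF_orbit x N \<in> {0, 1}" "0 < N"
  shows "\<And>n. n < N - 1 \<Longrightarrow> \<exists>d. admissible_digits (OOCF_orbit x n) = {d}"
    and "\<exists>u v. u \<noteq> v \<and> admissible_digits (OOCF_orbit x (N - 1)) = {u, v}"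
proof -
  show "\<exists>d. admissible_digits (OOCF_orbit x n) = {d}" if "n < N - 1" for n
    using admissible_digits_singleton assms(1)[of n] assms(1)[of "Suc n"] that by simp
  obtain M where "N = Suc M"
    using assms(3) gr0_implies_Suc by blast
  then have "OOCF_T (OOCF_orbit x (N - 1)) = OOCF_orbit x N"
    by simp
  then show "\<exists>u v. u \<noteq> v \<and> admissible_digits (OOCF_orbit x (N - 1)) = {u, v}"
    using admissible_digits_pair assms(1)[of "N - 1"] assms(2,3) by simp
qed

lemma inf_OOCF_exp_iff:
  "inf_OOCF_exp x d \<longleftrightarrow>
    (\<forall>n. d n \<in> admissible_digits (OOCF_orbit x n) \<and> OOCF_orbit x n \<noteq> 1)"
  unfolding inf_OOCF_exp_def admissible_digits_def by auto

lemma fin_OOCF_exp_iff: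
  "fin_OOCF_exp x ds \<longleftrightarrow> 1 \<le> length ds
    \<and> (\<forall>n < length ds. ds ! n \<in> admissible_digits (OOCF_orbit x n) \<and> OOCF_orbit x n \<noteq> 1)
    \<and> OOCF_orbit x (length ds) = 1"
  unfolding fin_OOCF_exp_def admissible_digits_def by auto

lemma card_choice_functions_one_pair:
  assumes "\<And>n. n \<noteq> m \<Longrightarrow> A n = {s n}" "A m = {u, v}" "u \<noteq> v"
  shows "card {d. \<forall>n. d n \<in> A n} = 2"
proof -
  have "{d. \<forall>n. d n \<in> A n} = {s(m := u), s(m := v)}"
  proof (intro equalityI subsetI)
    fix d
    assume "d \<in> {d. \<forall>n. d n \<in> A n}"
    then have "d n = s n" if "n \<noteq> m" for n
      using assms(1)[OF that] by auto
    moreover have "d m = u \<or> d m = v"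
      using \<open>d \<in> _\<close> assms(2) by auto
    ultimately show "d \<in> {s(m := u), s(m := v)}"
      by (auto simp: fun_eq_iff)
  qed (use assms(1,2) in auto)
  moreover have "s(m := u) \<noteq> s(m := v)"
    using assms(3) by (metis fun_upd_same)
  ultimately show ?thesis
    by simp
qed

lemma choice_lists_one_pair_last:
  assumes "0 < N" "\<And>n. n < N - 1 \<Longrightarrow> A n = {s n}" "A (N - 1) = {u, v}"
  shows "{ds. length ds = N \<and> (\<forall>n < N. ds ! n \<in> A n)}
    = {map s [0..<N - 1] @ [u], map s [0..<N - 1] @ [v]}"
proof (intro equalityI subsetI)
  fix ds
  assume "ds \<in> {ds. length ds = N \<and> (\<forall>n < N. ds ! n \<in> A n)}"
  then have len: "length ds = N" and ds: "\<And>n. n < N \<Longrightarrow> ds ! n \<in> A n"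
    by auto
  have "ds ! n = s n" if "n < N - 1" for n
    using ds[of n] assms(2)[OF that] that by auto
  then have "butlast ds = map s [0..<N - 1]"
    using len by (intro nth_equalityI) (auto simp: nth_butlast)
  moreover have ne: "ds \<noteq> []"
    using len assms(1) by auto
  ultimately have "ds = map s [0..<N - 1] @ [last ds]"
    by (metis append_butlast_last_id)
  moreover have "last ds \<in> {u, v}"
    using last_conv_nth[OF ne] ds[of "N - 1"] len assms(1,3) by simp
  ultimately show "ds \<in> {map s [0..<N - 1] @ [u], map s [0..<N - 1] @ [v]}"
    by auto
next
  fix ds
  assume "ds \<in> {map s [0..<N - 1] @ [u], map s [0..<N - 1] @ [v]}"
  then obtain w where ds: "ds = map s [0..<N - 1] @ [w]" and w: "w \<in> A (N - 1)"
    using assms(3) by auto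
  have "ds ! n \<in> A n" if "n < N" for n
  proof (cases "n < N - 1")
    case True
    then show ?thesis
      using assms(2) by (simp add: ds nth_append)
  next
    case False
    then have "n = N - 1"
      using that by simp
    then show ?thesis
      using w by (simp add: ds nth_append)
  qed
  moreover have "length ds = N"
    using assms(1) ds by simp
  ultimately show "ds \<in> {ds. length ds = N \<and> (\<forall>n < N. ds ! n \<in> A n)}"
    by simp
qed

lemma OOCF_expansions_0: "{d. inf_OOCF_exp 0 d} = {\<lambda>_. (2, -1)}"
  unfolding inf_OOCF_exp_iff OOCF_orbit_0 admissible_digits_0 by auto

lemma OOCF_expansions_irrational:
  assumes x: "0 < x" "x < 1" "x \<notin> \<rat>"
  shows "(\<exists>!d. inf_OOCF_exp x d) \<and> {ds. fin_OOCF_exp x ds} = {}"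
proof -
  have irrational: "OOCF_orbit x n \<notin> \<rat>" for n
    by (rule OOCF_orbit_invariant[where P = "\<lambda>y. y \<notin> \<rat>"])
      (use x in_Rats_if_OOCF_T_in_Rats in \<open>auto simp: order_le_less\<close>)
  have inside: "0 < OOCF_orbit x n \<and> OOCF_orbit x n < 1" for n
    using OOCF_orbit_range[of x n] irrational[of n] x by (auto simp: order_le_less)
  have "\<forall>n. \<exists>d. admissible_digits (OOCF_orbit x n) = {d}"
    using admissible_digits_singleton inside by (metis funpow.simps(2) o_apply)
  then obtain s where s: "\<And>n. admissible_digits (OOCF_orbit x n) = {s n}"
    by metis
  have ne1: "OOCF_orbit x n \<noteq> 1" for n
    using inside[of n] by simp
  have "{d. inf_OOCF_exp x d} = {s}"
    unfolding inf_OOCF_exp_iff s using ne1 by (auto simp: fun_eq_iff)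
  moreover have "{ds. fin_OOCF_exp x ds} = {}"
    unfolding fin_OOCF_exp_iff using ne1 by auto
  ultimately show ?thesis
    by (metis mem_Collect_eq singleton_iff)
qed

lemma OOCF_expansions_infty_rational:
  assumes x: "0 < x" "x < 1" "infty_rational x"
  shows "card {d. inf_OOCF_exp x d} = 2 \<and> {ds. fin_OOCF_exp x ds} = {}
    \<and> (\<forall>d. inf_OOCF_exp x d \<longrightarrow> (\<exists>N. \<forall>n\<ge>N. d n = (2, -1)))"
proof -
  obtain p q :: int where "0 < q" "x = of_int p / of_int q" "odd p \<noteq> odd q"
    using x(3) unfolding infty_rational_def by blast
  then have "odd_sum_fraction x" "x \<in> \<rat>"
    unfolding odd_sum_fraction_def by auto
  have "odd_sum_fraction (OOCF_orbit x n)" for n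
    by (rule OOCF_orbit_invariant[where P = odd_sum_fraction])
      (use x \<open>odd_sum_fraction x\<close> odd_sum_fraction_OOCF_T in auto)
  then have ne1: "OOCF_orbit x n \<noteq> 1" for n
    using odd_sum_fraction_ne_1 by blast
  obtain N where N: "0 < N" "\<And>n. n < N \<Longrightarrow> 0 < OOCF_orbit x n \<and> OOCF_orbit x n < 1"
    "OOCF_orbit x N \<in> {0, 1}"
    using rational_OOCF_orbit_first_hit \<open>x \<in> \<rat>\<close> x(1,2) by blast
  have tail: "admissible_digits (OOCF_orbit x n) = {(2, -1)}" if "N \<le> n" for n
    using N(3) ne1[of N] OOCF_orbit_add[of "n - N" N x] OOCF_orbit_0 that
    by (simp add: admissible_digits_0)
  have single: "\<exists>d. admissible_digits (OOCF_orbit x n) = {d}" if "n \<noteq> N - 1" for n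
  proof (cases "n < N")
    case True
    with that have "n < N - 1"
      by simp
    then show ?thesis
      using admissible_digits_along_orbit(1)[OF N(2,3,1)] by blast
  qed (use tail in auto)
  obtain s where "\<And>n. n \<noteq> N - 1 \<Longrightarrow> admissible_digits (OOCF_orbit x n) = {s n}"
    using single by metis
  moreover obtain u v where "u \<noteq> v" "admissible_digits (OOCF_orbit x (N - 1)) = {u, v}"
    using admissible_digits_along_orbit(2)[OF N(2,3,1)] by blast
  ultimately have "card {d. \<forall>n. d n \<in> admissible_digits (OOCF_orbit x n)} = 2"
    by (intro card_choice_functions_one_pair)
  then have "card {d. inf_OOCF_exp x d} = 2"
    unfolding inf_OOCF_exp_iff using ne1 by simp
  moreover have "{ds. fin_OOCF_exp x ds} = {}"
    unfolding fin_OOCF_exp_iff using ne1 by auto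
  moreover have "\<exists>N. \<forall>n\<ge>N. d n = (2, -1)" if "inf_OOCF_exp x d" for d
    using that tail unfolding inf_OOCF_exp_iff by blast
  ultimately show ?thesis
    by blast
qed

lemma OOCF_expansions_one_rational:
  assumes x: "0 < x" "x < 1" "one_rational x"
  shows "{d. inf_OOCF_exp x d} = {} \<and> card {ds. fin_OOCF_exp x ds} = 2
    \<and> (\<forall>ds es. fin_OOCF_exp x ds \<and> fin_OOCF_exp x es \<and> ds \<noteq> es \<longrightarrow>
          length ds = length es \<and> butlast ds = butlast es)"
proof -
  obtain p q :: int where "0 < q" "x = of_int p / of_int q" "odd p" "odd q"
    using x(3) unfolding one_rational_def by blast
  then have "odd_fraction x" "x \<in> \<rat>"
    unfolding odd_fraction_def by auto
  have "odd_fraction (OOCF_orbit x n)" for n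
    by (rule OOCF_orbit_invariant[where P = odd_fraction])
      (use x \<open>odd_fraction x\<close> odd_fraction_OOCF_T in auto)
  then have ne0: "OOCF_orbit x n \<noteq> 0" for n
    using odd_fraction_ne_0 by blast
  obtain N where N: "0 < N" "\<And>n. n < N \<Longrightarrow> 0 < OOCF_orbit x n \<and> OOCF_orbit x n < 1"
    "OOCF_orbit x N \<in> {0, 1}"
    using rational_OOCF_orbit_first_hit \<open>x \<in> \<rat>\<close> x(1,2) by blast
  have hit: "OOCF_orbit x N = 1"
    using N(3) ne0[of N] by simp
  have single: "\<exists>d. admissible_digits (OOCF_orbit x n) = {d}" if "n < N - 1" for n
    using admissible_digits_along_orbit(1)[OF N(2,3,1)] that by blast
  obtain s where s: "\<And>n. n < N - 1 \<Longrightarrow> admissible_digits (OOCF_orbit x n) = {s n}"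
    using single by metis
  obtain u v where uv: "u \<noteq> v" "admissible_digits (OOCF_orbit x (N - 1)) = {u, v}"
    using admissible_digits_along_orbit(2)[OF N(2,3,1)] by blast
  have lists: "{ds. length ds = N \<and> (\<forall>n < N. ds ! n \<in> admissible_digits (OOCF_orbit x n))}
      = {map s [0..<N - 1] @ [u], map s [0..<N - 1] @ [v]}"
    using N(1) s uv(2) by (rule choice_lists_one_pair_last)
  have before: "OOCF_orbit x n \<noteq> 1" if "n < N" for n
    using N(2)[OF that] by simp
  have "length ds = N" if "OOCF_orbit x (length ds) = 1" "\<forall>n < length ds. OOCF_orbit x n \<noteq> 1"
    for ds :: "(nat \<times> int) list"
  proof -
    have "\<not> length ds < N"
      using before that(1) by auto
    moreover have "\<not> N < length ds"
      using that(2) hit by auto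
    ultimately show ?thesis
      by simp
  qed
  then have "fin_OOCF_exp x ds \<longleftrightarrow>
      length ds = N \<and> (\<forall>n < N. ds ! n \<in> admissible_digits (OOCF_orbit x n))" for ds
    unfolding fin_OOCF_exp_iff using N(1) before hit by (auto simp: Suc_le_eq)
  then have fin: "{ds. fin_OOCF_exp x ds} = {map s [0..<N - 1] @ [u], map s [0..<N - 1] @ [v]}"
    using lists by simp
  have "{d. inf_OOCF_exp x d} = {}"
    unfolding inf_OOCF_exp_iff using hit by auto
  moreover have "card {ds. fin_OOCF_exp x ds} = 2"
    unfolding fin using uv(1) by simp
  moreover have "length ds = length es \<and> butlast ds = butlast es"
    if "fin_OOCF_exp x ds" "fin_OOCF_exp x es" for ds es
  proof -
    have "ds \<in> {ds. fin_OOCF_exp x ds}" "es \<in> {ds. fin_OOCF_exp x ds}"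
      using that by simp_all
    then show ?thesis
      unfolding fin by auto
  qed
  ultimately show ?thesis
    by blast
qed

theorem proposition2p1:
  shows "({d. inf_OOCF_exp 0 d} = {(\<lambda>_. (2, -1))})
    \<and> (\<forall>x::real. 0 < x \<and> x < 1 \<and> infty_rational x \<longrightarrow>
          card {d. inf_OOCF_exp x d} = 2
          \<and> {ds. fin_OOCF_exp x ds} = {}
          \<and> (\<forall>d. inf_OOCF_exp x d \<longrightarrow> (\<exists>N. \<forall>n\<ge>N. d n = (2, -1))))
    \<and> (\<forall>x::real. 0 < x \<and> x < 1 \<and> one_rational x \<longrightarrow>
          {d. inf_OOCF_exp x d} = {}
          \<and> card {ds. fin_OOCF_exp x ds} = 2
          \<and> (\<forall>ds es. fin_OOCF_exp x ds \<and> fin_OOCF_exp x es \<and> ds \<noteq> es \<longrightarrow>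
                length ds = length es \<and> butlast ds = butlast es))
    \<and> (\<forall>x::real. 0 < x \<and> x < 1 \<and> x \<notin> \<rat> \<longrightarrow>
          (\<exists>!d. inf_OOCF_exp x d) \<and> {ds. fin_OOCF_exp x ds} = {})"
  using OOCF_expansions_0 OOCF_expansions_infty_rational OOCF_expansions_one_rational
    OOCF_expansions_irrational by blast

end
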